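(* Let $\mathbf{C}$ be a category with a stable system of monics $\mathcal{M}$ that has pullbacks along $\mathcal{M}$-morphisms and has final pullback complements (FPCs) along $\mathcal{M}$-morphisms. Then the target functor $T:\mathsf{FPC}_v(\mathbf{C},\mathcal{M})\to\mathbf{C}|_{\mathcal{M}}$ is a Grothendieck opfibration.
   Context: A stable system of monics $\mathcal{M}$ in $\mathbf{C}$ is a class of monomorphisms containing all isomorphisms, closed under composition, and stable under pullback; $\rightarrowtail$ denotes morphisms in $\mathcal{M}$. "Has pullbacks along $\mathcal{M}$-morphisms": pullbacks of cospans $A\to B\leftarrowtail B'$ exist. Final pullback complement (FPC): for composable $A\xrightarrow{f}B\xrightarrow{m}C$, a pair $A\xrightarrow{n}F\xrightarrow{g}C$ with $g\circ n=m\circ f$ such that this square is a pullback, and such that for every pullback square $m\circ u=w\circ v$ (with $u:X\to B$, $v:X\to Y$, $w:Y\to C$) and every $t:X\to A$ with $f\circ t=u$, there is a unique $y:Y\to F$ with $g\circ y=w$ and $y\circ v=n\circ t$. "Has FPCs along $\mathcal{M}$-morphisms": FPCs exist whenever $m\in\mathcal{M}$. $\mathbf{C}|_{\mathcal{M}}$ is the category with the objects of $\mathbf{C}$ and the $\mathcal{M}$-morphisms as morphisms. The category $\mathsf{FPC}_v(\mathbf{C},\mathcal{M})$: objects are morphisms $f:A\to B$ of $\mathbf{C}$; a morphism from $f:A\to B$ to $f':A'\to B'$ is a pair $(\alpha,\beta)$ of $\mathcal{M}$-morphisms $\alpha:A\rightarrowtail A'$, $\beta:B\rightarrowtail B'$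 with $\beta\circ f=f'\circ\alpha$ such that $(\alpha,f')$ is an FPC of $(f,\beta)$; composition is componentwise (vertical pasting). The target functor $T$ sends $f:A\to B$ to $B$ and $(\alpha,\beta)$ to $\beta$. For a functor $P:\mathbf{E}\to\mathbf{B}$, a morphism $\varphi:e\to e'$ is op-Cartesian if for every $\psi:e\to e''$ and $g:P(e')\to P(e'')$ with $g\circ P(\varphi)=P(\psi)$ there is a unique $\chi:e'\to e''$ with $\chi\circ\varphi=\psi$ and $P(\chi)=g$; $P$ is a Grothendieck opfibration if for every $f:b\to b'$ and every $e$ with $P(e)=b$ there is an op-Cartesian $\varphi:e\to e'$ with $P(\varphi)=f$. *)

theory Defs
  imports Main
begin

record ('o, 'a) cat =
  Obj :: "'o set"
  Arr :: "'a set"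
  Dom :: "'a \<Rightarrow> 'o"
  Cod :: "'a \<Rightarrow> 'o"
  Comp :: "'a \<Rightarrow> 'a \<Rightarrow> 'a"
  Id :: "'o \<Rightarrow> 'a"

definition category :: "('o, 'a) cat \<Rightarrow> bool" where
  "category C \<longleftrightarrow>
     (\<forall>f\<in>Arr C. Dom C f \<in> Obj C \<and> Cod C f \<in> Obj C) \<and>
     (\<forall>x\<in>Obj C. Id C x \<in> Arr C \<and> Dom C (Id C x) = x \<and> Cod C (Id C x) = x) \<and>
     (\<forall>f\<in>Arr C. \<forall>g\<in>Arr C. Cod C f = Dom C g \<longrightarrow>
        Comp C g f \<in> Arr C \<and> Dom C (Comp C g f) = Dom C f \<and> Cod C (Comp C g f) = Cod C g) \<and>
     (\<forall>f\<in>Arr C. \<forall>g\<in>Arr C. \<forall>h\<in>Arr C. Cod C f = Dom C g \<longrightarrow> Cod C g = Dom C h \<longrightarrow>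
        Comp C h (Comp C g f) = Comp C (Comp C h g) f) \<and>
     (\<forall>f\<in>Arr C. Comp C f (Id C (Dom C f)) = f \<and> Comp C (Id C (Cod C f)) f = f)"

definition is_mono :: "('o, 'a) cat \<Rightarrow> 'a \<Rightarrow> bool" where
  "is_mono C m \<longleftrightarrow> m \<in> Arr C \<and>
     (\<forall>g\<in>Arr C. \<forall>h\<in>Arr C. Cod C g = Dom C m \<longrightarrow> Cod C h = Dom C m \<longrightarrow>
        Dom C g = Dom C h \<longrightarrow> Comp C m g = Comp C m h \<longrightarrow> g = h)"

definition is_iso :: "('o, 'a) cat \<Rightarrow> 'a \<Rightarrow> bool" where
  "is_iso C f \<longleftrightarrow> f \<in> Arr C \<and>
     (\<exists>g\<in>Arr C. Dom C g = Cod C f \<and> Cod C g = Dom C f \<and>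
        Comp C g f = Id C (Dom C f) \<and> Comp C f g = Id C (Cod C f))"

definition is_pullback :: "('o, 'a) cat \<Rightarrow> 'a \<Rightarrow> 'a \<Rightarrow> 'a \<Rightarrow> 'a \<Rightarrow> bool" where
  "is_pullback C f g p q \<longleftrightarrow>
     f \<in> Arr C \<and> g \<in> Arr C \<and> p \<in> Arr C \<and> q \<in> Arr C \<and>
     Cod C f = Cod C g \<and> Cod C p = Dom C f \<and> Cod C q = Dom C g \<and> Dom C p = Dom C q \<and>
     Comp C f p = Comp C g q \<and>
     (\<forall>p'\<in>Arr C. \<forall>q'\<in>Arr C. Dom C p' = Dom C q' \<longrightarrow> Cod C p' = Dom C f \<longrightarrow>
        Cod C q' = Dom C g \<longrightarrow> Comp C f p' = Comp C g q' \<longrightarrow>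
        (\<exists>!u. u \<in> Arr C \<and> Dom C u = Dom C p' \<and> Cod C u = Dom C p \<and>
              Comp C p u = p' \<and> Comp C q u = q'))"

definition stable_system_of_monics :: "('o, 'a) cat \<Rightarrow> 'a set \<Rightarrow> bool" where
  "stable_system_of_monics C M \<longleftrightarrow>
     M \<subseteq> Arr C \<and> (\<forall>m\<in>M. is_mono C m) \<and>
     (\<forall>f\<in>Arr C. is_iso C f \<longrightarrow> f \<in> M) \<and>
     (\<forall>m\<in>M. \<forall>n\<in>M. Cod C m = Dom C n \<longrightarrow> Comp C n m \<in> M) \<and>
     (\<forall>f m p q. m \<in> M \<longrightarrow> is_pullback C f m p q \<longrightarrow> p \<in> M)"

definition has_pullbacks_along :: "('o, 'a) cat \<Rightarrow> 'a set \<Rightarrow> bool" where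
  "has_pullbacks_along C M \<longleftrightarrow>
     (\<forall>f\<in>Arr C. \<forall>m\<in>M. Cod C f = Cod C m \<longrightarrow> (\<exists>p q. is_pullback C f m p q))"

text \<open>is_FPC C f m n g: for A --f--> B --m--> C, the pair A --n--> F --g--> C
  is a final pullback complement.\<close>
definition is_FPC :: "('o, 'a) cat \<Rightarrow> 'a \<Rightarrow> 'a \<Rightarrow> 'a \<Rightarrow> 'a \<Rightarrow> bool" where
  "is_FPC C f m n g \<longleftrightarrow>
     Cod C f = Dom C m \<and> Cod C n = Dom C g \<and>
     Comp C g n = Comp C m f \<and>
     is_pullback C m g f n \<and>
     (\<forall>u v w t. is_pullback C m w u v \<longrightarrow>
        t \<in> Arr C \<longrightarrow> Dom C t = Dom C u \<longrightarrow> Cod C t = Dom C f \<longrightarrow> Comp C f t = u \<longrightarrow>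
        (\<exists>!y. y \<in> Arr C \<and> Dom C y = Cod C v \<and> Cod C y = Dom C g \<and>
              Comp C g y = w \<and> Comp C y v = Comp C n t))"

definition has_FPCs_along :: "('o, 'a) cat \<Rightarrow> 'a set \<Rightarrow> bool" where
  "has_FPCs_along C M \<longleftrightarrow>
     (\<forall>f\<in>Arr C. \<forall>m\<in>M. Cod C f = Dom C m \<longrightarrow> (\<exists>n g. is_FPC C f m n g))"

definition restrict_cat :: "('o, 'a) cat \<Rightarrow> 'a set \<Rightarrow> ('o, 'a) cat" where
  "restrict_cat C M = C\<lparr>Arr := Arr C \<inter> M\<rparr>"

text \<open>FPC_v(C,M): objects are arrows of C; a morphism (alpha,beta) from f to f'
  is encoded as the tuple (f, f', alpha, beta).\<close>
definition FPC_v :: "('o, 'a) cat \<Rightarrow> 'a set \<Rightarrow> ('a, 'a \<times> 'a \<times> 'a \<times> 'a) cat" where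
  "FPC_v C M = \<lparr>
     Obj = Arr C,
     Arr = {(f, f', \<alpha>, \<beta>). f \<in> Arr C \<and> f' \<in> Arr C \<and> \<alpha> \<in> M \<and> \<beta> \<in> M \<and>
              Dom C \<alpha> = Dom C f \<and> Cod C \<alpha> = Dom C f' \<and>
              Dom C \<beta> = Cod C f \<and> Cod C \<beta> = Cod C f' \<and>
              Comp C \<beta> f = Comp C f' \<alpha> \<and> is_FPC C f \<beta> \<alpha> f'},
     Dom = (\<lambda>(f, f', \<alpha>, \<beta>). f),
     Cod = (\<lambda>(f, f', \<alpha>, \<beta>). f'),
     Comp = (\<lambda>(g, g', \<alpha>', \<beta>') (f, f', \<alpha>, \<beta>). (f, g', Comp C \<alpha>' \<alpha>, Comp C \<beta>' \<beta>)),
     Id = (\<lambda>f. (f, f, Id C (Dom C f), Id C (Cod C f))) \<rparr>"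

definition is_functor :: "('o, 'a) cat \<Rightarrow> ('p, 'b) cat \<Rightarrow> ('o \<Rightarrow> 'p) \<Rightarrow> ('a \<Rightarrow> 'b) \<Rightarrow> bool" where
  "is_functor E B F0 F1 \<longleftrightarrow>
     (\<forall>x\<in>Obj E. F0 x \<in> Obj B \<and> F1 (Id E x) = Id B (F0 x)) \<and>
     (\<forall>f\<in>Arr E. F1 f \<in> Arr B \<and> Dom B (F1 f) = F0 (Dom E f) \<and> Cod B (F1 f) = F0 (Cod E f)) \<and>
     (\<forall>f\<in>Arr E. \<forall>g\<in>Arr E. Cod E f = Dom E g \<longrightarrow> F1 (Comp E g f) = Comp B (F1 g) (F1 f))"

definition op_cartesian ::
  "('o, 'a) cat \<Rightarrow> ('p, 'b) cat \<Rightarrow> ('o \<Rightarrow> 'p) \<Rightarrow> ('a \<Rightarrow> 'b) \<Rightarrow> 'a \<Rightarrow> bool" where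
  "op_cartesian E B F0 F1 \<phi> \<longleftrightarrow> \<phi> \<in> Arr E \<and>
     (\<forall>\<psi>\<in>Arr E. \<forall>g\<in>Arr B. Dom E \<psi> = Dom E \<phi> \<longrightarrow> Dom B g = F0 (Cod E \<phi>) \<longrightarrow>
        Cod B g = F0 (Cod E \<psi>) \<longrightarrow> Comp B g (F1 \<phi>) = F1 \<psi> \<longrightarrow>
        (\<exists>!\<chi>. \<chi> \<in> Arr E \<and> Dom E \<chi> = Cod E \<phi> \<and> Cod E \<chi> = Cod E \<psi> \<and>
              Comp E \<chi> \<phi> = \<psi> \<and> F1 \<chi> = g))"

definition grothendieck_opfibration ::
  "('o, 'a) cat \<Rightarrow> ('p, 'b) cat \<Rightarrow> ('o \<Rightarrow> 'p) \<Rightarrow> ('a \<Rightarrow> 'b) \<Rightarrow> bool" where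
  "grothendieck_opfibration E B F0 F1 \<longleftrightarrow> is_functor E B F0 F1 \<and>
     (\<forall>e\<in>Obj E. \<forall>u\<in>Arr B. Dom B u = F0 e \<longrightarrow>
        (\<exists>\<phi>. \<phi> \<in> Arr E \<and> Dom E \<phi> = e \<and> F1 \<phi> = u \<and> op_cartesian E B F0 F1 \<phi>))"

definition target_obj :: "('o, 'a) cat \<Rightarrow> 'a \<Rightarrow> 'o" where
  "target_obj C f = Cod C f"

definition target_arr :: "'a \<times> 'a \<times> 'a \<times> 'a \<Rightarrow> 'a" where
  "target_arr = (\<lambda>(f, f', \<alpha>, \<beta>). \<beta>)"

end

theory Submission
  imports Defs
begin

text \<open>
  Over e : A \<rightarrow> B, the op-Cartesian lift of u : B \<rightarrowtail> B' is the FPC (n, g) of (e, u).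
  A morphism out of e over g' u is an FPC (\<alpha>, h) of (e, g' u); composing the pullback square
  of (n, g) with the mono g' gives a pullback to which the FPC property of (\<alpha>, h) applies,
  producing the unique \<gamma> with h \<gamma> = g' g and \<gamma> n = \<alpha>. What remains is that FPCs decompose:
  (\<gamma>, h) is an FPC of (g, g'). Its square is a pullback because the comparison map from F
  into a pullback P of g' and h has an inverse, namely the map P \<rightarrow> F supplied by the FPC
  (n, g), the left part of the rectangle through P being a pullback by the pullback lemma.
  For its universal property, a pullback along g' is extended by pulling u back along it;
  the pasted rectangle is a pullback along g' u, where the outer FPC (\<alpha>, h) applies.
\<close>

lemma FPC_v_simps [simp]:
  "Obj (FPC_v C M) = Arr C"
  "Dom (FPC_v C M) (f, f', \<alpha>, \<beta>) = f"
  "Cod (FPC_v C M) (f, f', \<alpha>, \<beta>) = f'"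
  "Comp (FPC_v C M) (g, g', \<alpha>', \<beta>') (f, f', \<alpha>, \<beta>) = (f, g', Comp C \<alpha>' \<alpha>, Comp C \<beta>' \<beta>)"
  "Id (FPC_v C M) f = (f, f, Id C (Dom C f), Id C (Cod C f))"
  by (simp_all add: FPC_v_def)

lemma FPC_v_arr_iff:
  "(f, f', \<alpha>, \<beta>) \<in> Arr (FPC_v C M) \<longleftrightarrow> \<alpha> \<in> M \<and> \<beta> \<in> M \<and> is_FPC C f \<beta> \<alpha> f'"
  unfolding FPC_v_def is_FPC_def is_pullback_def by auto

lemma restrict_cat_simps [simp]:
  "Obj (restrict_cat C M) = Obj C" "Arr (restrict_cat C M) = Arr C \<inter> M"
  "Dom (restrict_cat C M) = Dom C" "Cod (restrict_cat C M) = Cod C"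
  "Comp (restrict_cat C M) = Comp C" "Id (restrict_cat C M) = Id C"
  by (simp_all add: restrict_cat_def)

context
  fixes C :: "('o, 'a) cat"
  assumes cat: "category C"
begin

abbreviation C_comp (infixr "\<cdot>" 70) where "g \<cdot> f \<equiv> Comp C g f"

lemma comp_closed [simp]: "f \<in> Arr C \<Longrightarrow> g \<in> Arr C \<Longrightarrow> Cod C f = Dom C g \<Longrightarrow> g \<cdot> f \<in> Arr C"
  and dom_comp [simp]: "f \<in> Arr C \<Longrightarrow> g \<in> Arr C \<Longrightarrow> Cod C f = Dom C g \<Longrightarrow> Dom C (g \<cdot> f) = Dom C f"
  and cod_comp [simp]: "f \<in> Arr C \<Longrightarrow> g \<in> Arr C \<Longrightarrow> Cod C f = Dom C g \<Longrightarrow> Cod C (g \<cdot> f) = Cod C g"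
  using cat unfolding category_def by blast+

lemma cat_comp_assoc:
  "f \<in> Arr C \<Longrightarrow> g \<in> Arr C \<Longrightarrow> h \<in> Arr C \<Longrightarrow> Cod C f = Dom C g \<Longrightarrow> Cod C g = Dom C h \<Longrightarrow>
   h \<cdot> (g \<cdot> f) = (h \<cdot> g) \<cdot> f"
  using cat unfolding category_def by blast

lemma dom_obj [simp]: "f \<in> Arr C \<Longrightarrow> Dom C f \<in> Obj C"
  and cod_obj [simp]: "f \<in> Arr C \<Longrightarrow> Cod C f \<in> Obj C"
  and id_arr [simp]: "x \<in> Obj C \<Longrightarrow> Id C x \<in> Arr C"
  and dom_id [simp]: "x \<in> Obj C \<Longrightarrow> Dom C (Id C x) = x"
  and cod_id [simp]: "x \<in> Obj C \<Longrightarrow> Cod C (Id C x) = x"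
  using cat unfolding category_def by blast+

lemma comp_id_right [simp]: "f \<in> Arr C \<Longrightarrow> f \<cdot> Id C (Dom C f) = f"
  and comp_id_left [simp]: "f \<in> Arr C \<Longrightarrow> Id C (Cod C f) \<cdot> f = f"
  using cat unfolding category_def by blast+

lemma mono_cancel:
  "is_mono C m \<Longrightarrow> g \<in> Arr C \<Longrightarrow> h \<in> Arr C \<Longrightarrow> Cod C g = Dom C m \<Longrightarrow> Cod C h = Dom C m \<Longrightarrow>
   Dom C g = Dom C h \<Longrightarrow> m \<cdot> g = m \<cdot> h \<Longrightarrow> g = h"
  unfolding is_mono_def by blast

lemma pullbackD:
  assumes "is_pullback C f g p q"
  shows "f \<in> Arr C" "g \<in> Arr C" "p \<in> Arr C" "q \<in> Arr C" "Cod C f = Cod C g"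
    "Cod C p = Dom C f" "Cod C q = Dom C g" "Dom C p = Dom C q" "f \<cdot> p = g \<cdot> q"
  using assms unfolding is_pullback_def by blast+

lemma pullback_universal:
  assumes "is_pullback C f g p q" "p' \<in> Arr C" "q' \<in> Arr C" "Dom C p' = Dom C q'"
    "Cod C p' = Dom C f" "Cod C q' = Dom C g" "f \<cdot> p' = g \<cdot> q'"
  shows "\<exists>!z. z \<in> Arr C \<and> Dom C z = Dom C p' \<and> Cod C z = Dom C p \<and> p \<cdot> z = p' \<and> q \<cdot> z = q'"
proof -
  have "\<forall>p'\<in>Arr C. \<forall>q'\<in>Arr C. Dom C p' = Dom C q' \<longrightarrow> Cod C p' = Dom C f \<longrightarrow>
      Cod C q' = Dom C g \<longrightarrow> f \<cdot> p' = g \<cdot> q' \<longrightarrow>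
      (\<exists>!z. z \<in> Arr C \<and> Dom C z = Dom C p' \<and> Cod C z = Dom C p \<and> p \<cdot> z = p' \<and> q \<cdot> z = q')"
    using assms(1) unfolding is_pullback_def by (elim conjE)
  then show ?thesis using assms(2-) by blast
qed

lemma pullback_factor:
  assumes "is_pullback C f g p q" "p' \<in> Arr C" "q' \<in> Arr C" "Dom C p' = Dom C q'"
    "Cod C p' = Dom C f" "Cod C q' = Dom C g" "f \<cdot> p' = g \<cdot> q'"
  obtains z where "z \<in> Arr C" "Dom C z = Dom C p'" "Cod C z = Dom C p" "p \<cdot> z = p'" "q \<cdot> z = q'"
  using pullback_universal[OF assms] by blast

lemma pullback_factor_unique:
  assumes pb: "is_pullback C f g p q" and z: "z1 \<in> Arr C" "z2 \<in> Arr C" "Dom C z1 = Dom C z2"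
    "Cod C z1 = Dom C p" "Cod C z2 = Dom C p" "p \<cdot> z1 = p \<cdot> z2" "q \<cdot> z1 = q \<cdot> z2"
  shows "z1 = z2"
proof -
  note d = pullbackD[OF pb]
  have "f \<cdot> (p \<cdot> z1) = g \<cdot> (q \<cdot> z1)"
    using z d cat_comp_assoc[of z1 p f] cat_comp_assoc[of z1 q g] by auto
  with pullback_universal[OF pb, of "p \<cdot> z1" "q \<cdot> z1"] z d
  have "\<exists>!u. u \<in> Arr C \<and> Dom C u = Dom C z1 \<and> Cod C u = Dom C p \<and> p \<cdot> u = p \<cdot> z1 \<and> q \<cdot> u = q \<cdot> z1"
    by simp
  then show ?thesis using z by metis
qed

lemma pullbackI:
  assumes "f \<in> Arr C" "g \<in> Arr C" "p \<in> Arr C" "q \<in> Arr C"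
    "Cod C f = Cod C g" "Cod C p = Dom C f" "Cod C q = Dom C g" "Dom C p = Dom C q"
    "f \<cdot> p = g \<cdot> q"
    and factor: "\<And>p' q'. p' \<in> Arr C \<Longrightarrow> q' \<in> Arr C \<Longrightarrow> Dom C p' = Dom C q' \<Longrightarrow>
      Cod C p' = Dom C f \<Longrightarrow> Cod C q' = Dom C g \<Longrightarrow> f \<cdot> p' = g \<cdot> q' \<Longrightarrow>
      \<exists>z. z \<in> Arr C \<and> Dom C z = Dom C p' \<and> Cod C z = Dom C p \<and> p \<cdot> z = p' \<and> q \<cdot> z = q'"
    and unique: "\<And>z1 z2. z1 \<in> Arr C \<Longrightarrow> z2 \<in> Arr C \<Longrightarrow> Dom C z1 = Dom C z2 \<Longrightarrow>
      Cod C z1 = Dom C p \<Longrightarrow> Cod C z2 = Dom C p \<Longrightarrow> p \<cdot> z1 = p \<cdot> z2 \<Longrightarrow> q \<cdot> z1 = q \<cdot> z2 \<Longrightarrow> z1 = z2"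
  shows "is_pullback C f g p q"
  unfolding is_pullback_def
proof (intro conjI ballI impI)
  fix p' q' assume "p' \<in> Arr C" "q' \<in> Arr C" "Dom C p' = Dom C q'" "Cod C p' = Dom C f"
    "Cod C q' = Dom C g" "f \<cdot> p' = g \<cdot> q'"
  with factor obtain z where "z \<in> Arr C \<and> Dom C z = Dom C p' \<and> Cod C z = Dom C p \<and> p \<cdot> z = p' \<and> q \<cdot> z = q'"
    by blast
  then show "\<exists>!u. u \<in> Arr C \<and> Dom C u = Dom C p' \<and> Cod C u = Dom C p \<and> p \<cdot> u = p' \<and> q \<cdot> u = q'"
    using unique[of _ z] by (intro ex1I[of _ z]) auto
qed (use assms in auto)

lemma pullback_sym:
  assumes pb: "is_pullback C f g p q"
  shows "is_pullback C g f q p"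
proof -
  note d = pullbackD[OF pb]
  show ?thesis
  proof (rule pullbackI)
    fix p' q' assume "p' \<in> Arr C" "q' \<in> Arr C" "Dom C p' = Dom C q'" "Cod C p' = Dom C g"
      "Cod C q' = Dom C f" "g \<cdot> p' = f \<cdot> q'"
    then obtain z where "z \<in> Arr C" "Dom C z = Dom C q'" "Cod C z = Dom C p" "p \<cdot> z = q'" "q \<cdot> z = p'"
      using pullback_factor[OF pb, of q' p'] by metis
    then show "\<exists>z. z \<in> Arr C \<and> Dom C z = Dom C p' \<and> Cod C z = Dom C q \<and> q \<cdot> z = p' \<and> p \<cdot> z = q'"
      using \<open>Dom C p' = Dom C q'\<close> d by auto
  next
    fix z1 z2 assume "z1 \<in> Arr C" "z2 \<in> Arr C" "Dom C z1 = Dom C z2" "Cod C z1 = Dom C q"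
      "Cod C z2 = Dom C q" "q \<cdot> z1 = q \<cdot> z2" "p \<cdot> z1 = p \<cdot> z2"
    then show "z1 = z2" using pullback_factor_unique[OF pb, of z1 z2] d by simp
  qed (use d in auto)
qed

lemma pullback_postcompose_mono:
  assumes pb: "is_pullback C f g p q" and m: "is_mono C m" "Dom C m = Cod C f"
  shows "is_pullback C (m \<cdot> f) (m \<cdot> g) p q"
proof -
  note d = pullbackD[OF pb]
  have mA: "m \<in> Arr C" using m unfolding is_mono_def by blast
  show ?thesis
  proof (rule pullbackI)
    show "(m \<cdot> f) \<cdot> p = (m \<cdot> g) \<cdot> q"
      using d mA m cat_comp_assoc[of p f m] cat_comp_assoc[of q g m] by auto
  next
    fix p' q' assume h: "p' \<in> Arr C" "q' \<in> Arr C" "Dom C p' = Dom C q'" "Cod C p' = Dom C (m \<cdot> f)"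
      "Cod C q' = Dom C (m \<cdot> g)" "(m \<cdot> f) \<cdot> p' = (m \<cdot> g) \<cdot> q'"
    have h2: "Cod C p' = Dom C f" "Cod C q' = Dom C g" using h d mA m by auto
    have "m \<cdot> (f \<cdot> p') = m \<cdot> (g \<cdot> q')"
      using h h2 d mA m cat_comp_assoc[of p' f m] cat_comp_assoc[of q' g m] by auto
    then have "f \<cdot> p' = g \<cdot> q'" using mono_cancel[OF m(1)] h h2 d m by auto
    then show "\<exists>z. z \<in> Arr C \<and> Dom C z = Dom C p' \<and> Cod C z = Dom C p \<and> p \<cdot> z = p' \<and> q \<cdot> z = q'"
      using pullback_factor[OF pb] h h2 by metis
  qed (use d mA m pullback_factor_unique[OF pb] in auto)
qed

lemma pullback_paste:
  assumes left: "is_pullback C u u' a b" and right: "is_pullback C g w u' v"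
  shows "is_pullback C (g \<cdot> u) w a (v \<cdot> b)"
proof -
  note d1 = pullbackD[OF left] and d2 = pullbackD[OF right]
  show ?thesis
  proof (rule pullbackI)
    show "(g \<cdot> u) \<cdot> a = w \<cdot> v \<cdot> b"
      using d1 d2 cat_comp_assoc[of a u g] cat_comp_assoc[of b u' g] cat_comp_assoc[of b v w] by auto
  next
    fix p' q' assume h: "p' \<in> Arr C" "q' \<in> Arr C" "Dom C p' = Dom C q'" "Cod C p' = Dom C (g \<cdot> u)"
      "Cod C q' = Dom C w" "(g \<cdot> u) \<cdot> p' = w \<cdot> q'"
    have h2: "Cod C p' = Dom C u" using h d1 d2 by auto
    have "g \<cdot> (u \<cdot> p') = w \<cdot> q'" using h h2 d1 d2 cat_comp_assoc[of p' u g] by auto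
    then obtain x where x: "x \<in> Arr C" "Dom C x = Dom C p'" "Cod C x = Dom C u'" "u' \<cdot> x = u \<cdot> p'" "v \<cdot> x = q'"
      using pullback_factor[OF right, of "u \<cdot> p'" q'] h h2 d1 d2 by auto
    then obtain z where z: "z \<in> Arr C" "Dom C z = Dom C p'" "Cod C z = Dom C a" "a \<cdot> z = p'" "b \<cdot> z = x"
      using pullback_factor[OF left, of p' x] h h2 d1 d2 by auto
    have "(v \<cdot> b) \<cdot> z = q'" using z x d1 d2 cat_comp_assoc[of z b v] by auto
    then show "\<exists>z. z \<in> Arr C \<and> Dom C z = Dom C p' \<and> Cod C z = Dom C a \<and> a \<cdot> z = p' \<and> (v \<cdot> b) \<cdot> z = q'"
      using z by blast
  next
    fix z1 z2 assume h: "z1 \<in> Arr C" "z2 \<in> Arr C" "Dom C z1 = Dom C z2" "Cod C z1 = Dom C a"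
      "Cod C z2 = Dom C a" "a \<cdot> z1 = a \<cdot> z2" "(v \<cdot> b) \<cdot> z1 = (v \<cdot> b) \<cdot> z2"
    have "u' \<cdot> (b \<cdot> z1) = u' \<cdot> (b \<cdot> z2)"
      using h d1 cat_comp_assoc[of z1 b u'] cat_comp_assoc[of z2 b u'] cat_comp_assoc[of z1 a u] cat_comp_assoc[of z2 a u]
      by auto
    moreover have "v \<cdot> (b \<cdot> z1) = v \<cdot> (b \<cdot> z2)"
      using h d1 d2 cat_comp_assoc[of z1 b v] cat_comp_assoc[of z2 b v] by auto
    ultimately have "b \<cdot> z1 = b \<cdot> z2"
      using pullback_factor_unique[OF right] h d1 d2 by auto
    then show "z1 = z2" using pullback_factor_unique[OF left] h by blast
  qed (use d1 d2 in auto)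
qed

lemma pullback_cancel:
  assumes right: "is_pullback C g w p q" and outer: "is_pullback C (g \<cdot> u) w f r"
    and u: "u \<in> Arr C" "Cod C u = Dom C g"
    and k: "k \<in> Arr C" "Dom C k = Dom C f" "Cod C k = Dom C p" "p \<cdot> k = u \<cdot> f" "q \<cdot> k = r"
  shows "is_pullback C u p f k"
proof -
  note dR = pullbackD[OF right] and dO = pullbackD[OF outer]
  show ?thesis
  proof (rule pullbackI)
    fix a b assume h: "a \<in> Arr C" "b \<in> Arr C" "Dom C a = Dom C b" "Cod C a = Dom C u"
      "Cod C b = Dom C p" "u \<cdot> a = p \<cdot> b"
    have "(g \<cdot> u) \<cdot> a = w \<cdot> (q \<cdot> b)"
      using h u dR cat_comp_assoc[of a u g] cat_comp_assoc[of b p g] cat_comp_assoc[of b q w] by auto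
    then obtain c where c: "c \<in> Arr C" "Dom C c = Dom C a" "Cod C c = Dom C f" "f \<cdot> c = a" "r \<cdot> c = q \<cdot> b"
      using pullback_factor[OF outer, of a "q \<cdot> b"] h u dR dO by auto
    have "p \<cdot> (k \<cdot> c) = p \<cdot> b"
      using c h u k dR dO cat_comp_assoc[of c k p] cat_comp_assoc[of c f u] by auto
    moreover have "q \<cdot> (k \<cdot> c) = q \<cdot> b"
      using c h k dR dO cat_comp_assoc[of c k q] by auto
    ultimately have "k \<cdot> c = b"
      using pullback_factor_unique[OF right] c h k dO by auto
    then show "\<exists>z. z \<in> Arr C \<and> Dom C z = Dom C a \<and> Cod C z = Dom C f \<and> f \<cdot> z = a \<and> k \<cdot> z = b"
      using c by blast
  next
    fix z1 z2 assume h: "z1 \<in> Arr C" "z2 \<in> Arr C" "Dom C z1 = Dom C z2" "Cod C z1 = Dom C f"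
      "Cod C z2 = Dom C f" "f \<cdot> z1 = f \<cdot> z2" "k \<cdot> z1 = k \<cdot> z2"
    have "r \<cdot> z1 = r \<cdot> z2"
      using h k dR cat_comp_assoc[of z1 k q] cat_comp_assoc[of z2 k q] by auto
    then show "z1 = z2" using pullback_factor_unique[OF outer] h dO by blast
  qed (use u k dR dO in auto)
qed

lemma pullback_precompose_iso:
  assumes pb: "is_pullback C f g p q"
    and k: "k \<in> Arr C" "Cod C k = Dom C p"
    and y: "y \<in> Arr C" "Dom C y = Dom C p" "Cod C y = Dom C k"
    and inverse: "y \<cdot> k = Id C (Dom C k)" "k \<cdot> y = Id C (Dom C p)"
  shows "is_pullback C f g (p \<cdot> k) (q \<cdot> k)"
proof -
  note d = pullbackD[OF pb]
  show ?thesis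
  proof (rule pullbackI)
    show "f \<cdot> p \<cdot> k = g \<cdot> q \<cdot> k"
      using d k cat_comp_assoc[of k p f] cat_comp_assoc[of k q g] by auto
  next
    fix p' q' assume h: "p' \<in> Arr C" "q' \<in> Arr C" "Dom C p' = Dom C q'" "Cod C p' = Dom C f"
      "Cod C q' = Dom C g" "f \<cdot> p' = g \<cdot> q'"
    then obtain z where z: "z \<in> Arr C" "Dom C z = Dom C p'" "Cod C z = Dom C p" "p \<cdot> z = p'" "q \<cdot> z = q'"
      using pullback_factor[OF pb] by metis
    have "k \<cdot> (y \<cdot> z) = z"
      using z k y inverse cat_comp_assoc[of z y k] comp_id_left[of z] by auto
    then have "(p \<cdot> k) \<cdot> (y \<cdot> z) = p'" "(q \<cdot> k) \<cdot> (y \<cdot> z) = q'"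
      using z k y d cat_comp_assoc[of "y \<cdot> z" k p] cat_comp_assoc[of "y \<cdot> z" k q] by auto
    then show "\<exists>z'. z' \<in> Arr C \<and> Dom C z' = Dom C p' \<and> Cod C z' = Dom C (p \<cdot> k) \<and>
        (p \<cdot> k) \<cdot> z' = p' \<and> (q \<cdot> k) \<cdot> z' = q'"
      using z k y d by (intro exI[of _ "y \<cdot> z"]) auto
  next
    fix z1 z2 assume h: "z1 \<in> Arr C" "z2 \<in> Arr C" "Dom C z1 = Dom C z2" "Cod C z1 = Dom C (p \<cdot> k)"
      "Cod C z2 = Dom C (p \<cdot> k)" "(p \<cdot> k) \<cdot> z1 = (p \<cdot> k) \<cdot> z2" "(q \<cdot> k) \<cdot> z1 = (q \<cdot> k) \<cdot> z2"
    have cod: "Cod C z1 = Dom C k" "Cod C z2 = Dom C k" using h k d by auto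
    have "k \<cdot> z1 = k \<cdot> z2"
      using pullback_factor_unique[OF pb, of "k \<cdot> z1" "k \<cdot> z2"] h cod k d
        cat_comp_assoc[of z1 k p] cat_comp_assoc[of z2 k p] cat_comp_assoc[of z1 k q] cat_comp_assoc[of z2 k q]
      by auto
    then have "(y \<cdot> k) \<cdot> z1 = (y \<cdot> k) \<cdot> z2"
      using h cod k y d cat_comp_assoc[of z1 k y] cat_comp_assoc[of z2 k y] by auto
    then show "z1 = z2" using h cod inverse comp_id_left[of z1] comp_id_left[of z2] by simp
  qed (use d k in auto)
qed

lemma FPC_pullback: "is_FPC C f m n g \<Longrightarrow> is_pullback C m g f n"
  unfolding is_FPC_def by blast

lemma FPC_universal:
  assumes "is_FPC C f m n g" "is_pullback C m w u v"
    and "t \<in> Arr C" "Dom C t = Dom C u" "Cod C t = Dom C f" "f \<cdot> t = u"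
  shows "\<exists>!y. y \<in> Arr C \<and> Dom C y = Cod C v \<and> Cod C y = Dom C g \<and> g \<cdot> y = w \<and> y \<cdot> v = n \<cdot> t"
proof -
  have "\<forall>u v w t. is_pullback C m w u v \<longrightarrow>
      t \<in> Arr C \<longrightarrow> Dom C t = Dom C u \<longrightarrow> Cod C t = Dom C f \<longrightarrow> f \<cdot> t = u \<longrightarrow>
      (\<exists>!y. y \<in> Arr C \<and> Dom C y = Cod C v \<and> Cod C y = Dom C g \<and> g \<cdot> y = w \<and> y \<cdot> v = n \<cdot> t)"
    using assms(1) unfolding is_FPC_def by (elim conjE)
  then show ?thesis using assms(2-) by blast
qed

lemma FPC_factor:
  assumes "is_FPC C f m n g" "is_pullback C m w u v"
    and "t \<in> Arr C" "Dom C t = Dom C u" "Cod C t = Dom C f" "f \<cdot> t = u"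
  obtains y where "y \<in> Arr C" "Dom C y = Cod C v" "Cod C y = Dom C g" "g \<cdot> y = w" "y \<cdot> v = n \<cdot> t"
  using FPC_universal[OF assms] by blast

lemma FPC_factor_unique:
  assumes "is_FPC C f m n g" "is_pullback C m w u v"
    and "t \<in> Arr C" "Dom C t = Dom C u" "Cod C t = Dom C f" "f \<cdot> t = u"
    and "y1 \<in> Arr C" "Dom C y1 = Cod C v" "Cod C y1 = Dom C g" "g \<cdot> y1 = w" "y1 \<cdot> v = n \<cdot> t"
    and "y2 \<in> Arr C" "Dom C y2 = Cod C v" "Cod C y2 = Dom C g" "g \<cdot> y2 = w" "y2 \<cdot> v = n \<cdot> t"
  shows "y1 = y2"
  using FPC_universal[OF assms(1-6)] assms(7-) by metis

lemma FPC_universal_pullback: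
  assumes F: "is_FPC C f m n g" and pb: "is_pullback C m w f v"
  shows "\<exists>!y. y \<in> Arr C \<and> Dom C y = Cod C v \<and> Cod C y = Dom C g \<and> g \<cdot> y = w \<and> y \<cdot> v = n"
proof -
  note d = pullbackD[OF FPC_pullback[OF F]]
  show ?thesis
    using FPC_universal[OF F pb, of "Id C (Dom C f)"] comp_id_right[of f] comp_id_right[of n] d by simp
qed

lemma FPC_factor_pullback:
  assumes "is_FPC C f m n g" "is_pullback C m w f v"
  obtains y where "y \<in> Arr C" "Dom C y = Cod C v" "Cod C y = Dom C g" "g \<cdot> y = w" "y \<cdot> v = n"
  using FPC_universal_pullback[OF assms] by blast

lemma FPC_factor_pullback_unique:
  assumes "is_FPC C f m n g" "is_pullback C m w f v"
    and "y1 \<in> Arr C" "Dom C y1 = Cod C v" "Cod C y1 = Dom C g" "g \<cdot> y1 = w" "y1 \<cdot> v = n"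
    and "y2 \<in> Arr C" "Dom C y2 = Cod C v" "Cod C y2 = Dom C g" "g \<cdot> y2 = w" "y2 \<cdot> v = n"
  shows "y1 = y2"
  using FPC_universal_pullback[OF assms(1,2)] assms(3-) by metis

lemma FPC_decompose_pullback:
  assumes M: "stable_system_of_monics C M" "has_pullbacks_along C M"
    and left: "is_FPC C f u n g" and outer: "is_FPC C f (g' \<cdot> u) \<alpha> h"
    and g': "g' \<in> M" "Dom C g' = Cod C g"
    and \<gamma>: "\<gamma> \<in> Arr C" "Dom C \<gamma> = Dom C g" "Cod C \<gamma> = Dom C h" "h \<cdot> \<gamma> = g' \<cdot> g" "\<gamma> \<cdot> n = \<alpha>"
  shows "is_pullback C g' h g \<gamma>"
proof -
  have mono: "is_mono C g'" and g'A: "g' \<in> Arr C"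
    using M(1) g' unfolding stable_system_of_monics_def by auto
  have L: "is_pullback C u g f n" by (rule FPC_pullback[OF left])
  have O: "is_pullback C (g' \<cdot> u) h f \<alpha>" by (rule FPC_pullback[OF outer])
  note dL = pullbackD[OF L] and dO = pullbackD[OF O]
  have h: "h \<in> Arr C" "Cod C h = Cod C g'" using dO dL g'A g' by auto
  then obtain q p where "is_pullback C h g' q p"
    using M(2) g' unfolding has_pullbacks_along_def by metis
  then have R: "is_pullback C g' h p q" by (rule pullback_sym)
  note dR = pullbackD[OF R]
  obtain k where k: "k \<in> Arr C" "Dom C k = Dom C g" "Cod C k = Dom C p" "p \<cdot> k = g" "q \<cdot> k = \<gamma>"
    using pullback_factor[OF R, of g \<gamma>] dL \<gamma> g' by auto
  have kn: "k \<cdot> n \<in> Arr C" "Dom C (k \<cdot> n) = Dom C f" "Cod C (k \<cdot> n) = Dom C p"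
    using k dL by auto
  have kn_comm: "p \<cdot> (k \<cdot> n) = u \<cdot> f" "q \<cdot> (k \<cdot> n) = \<alpha>"
    using k dL \<gamma> dR cat_comp_assoc[of n k p] cat_comp_assoc[of n k q] by auto
  have "Cod C u = Dom C g'" using dL g' by simp
  from pullback_cancel[OF R O dL(1) this kn kn_comm]
  have S: "is_pullback C u p f (k \<cdot> n)" .
  obtain y where y: "y \<in> Arr C" "Dom C y = Dom C p" "Cod C y = Dom C g" "g \<cdot> y = p" "y \<cdot> (k \<cdot> n) = n"
    by (rule FPC_factor_pullback[OF left S]) (use kn in auto)
  have yk: "y \<cdot> k = Id C (Dom C g)"
  proof (rule FPC_factor_pullback_unique[OF left L])
    show "g \<cdot> (y \<cdot> k) = g" using y k dL cat_comp_assoc[of k y g] by auto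
    show "(y \<cdot> k) \<cdot> n = n" using y k dL cat_comp_assoc[of n k y] by auto
    show "g \<cdot> Id C (Dom C g) = g" "Id C (Dom C g) \<cdot> n = n"
      using dL comp_id_left[of n] by auto
  qed (use y k dL in auto)
  have S': "is_pullback C (g' \<cdot> u) (g' \<cdot> p) f (k \<cdot> n)"
    using pullback_postcompose_mono[OF S mono] g' dL by auto
  have \<gamma>y: "\<gamma> \<cdot> y = q"
  proof (rule FPC_factor_pullback_unique[OF outer S'])
    show "h \<cdot> (\<gamma> \<cdot> y) = g' \<cdot> p"
      using y \<gamma> h dL g'A g' cat_comp_assoc[of y \<gamma> h] cat_comp_assoc[of y g g'] by auto
    show "(\<gamma> \<cdot> y) \<cdot> (k \<cdot> n) = \<alpha>" using y \<gamma> kn dL cat_comp_assoc[of "k \<cdot> n" y \<gamma>] by auto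
    show "h \<cdot> q = g' \<cdot> p" "q \<cdot> (k \<cdot> n) = \<alpha>" using dR k dL cat_comp_assoc[of n k q] \<gamma> by auto
  qed (use y \<gamma> kn dR in auto)
  have ky: "k \<cdot> y = Id C (Dom C p)"
  proof (rule pullback_factor_unique[OF R])
    show "p \<cdot> (k \<cdot> y) = p \<cdot> Id C (Dom C p)" using k y dR cat_comp_assoc[of y k p] comp_id_right[of p] by auto
    show "q \<cdot> (k \<cdot> y) = q \<cdot> Id C (Dom C p)" using k y \<gamma>y dR cat_comp_assoc[of y k q] comp_id_right[of q] by auto
  qed (use k y dR in auto)
  have "is_pullback C g' h (p \<cdot> k) (q \<cdot> k)"
    by (rule pullback_precompose_iso[OF R k(1,3) y(1,2)]) (use yk ky k y in auto)
  then show ?thesis using k by simp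
qed

lemma FPC_decompose:
  assumes M: "stable_system_of_monics C M" "has_pullbacks_along C M"
    and left: "is_FPC C f u n g" and u: "u \<in> M" and outer: "is_FPC C f (g' \<cdot> u) \<alpha> h"
    and g': "g' \<in> M" "Dom C g' = Cod C g"
    and \<gamma>: "\<gamma> \<in> Arr C" "Dom C \<gamma> = Dom C g" "Cod C \<gamma> = Dom C h" "h \<cdot> \<gamma> = g' \<cdot> g" "\<gamma> \<cdot> n = \<alpha>"
  shows "is_FPC C g g' \<gamma> h"
proof -
  have mono: "is_mono C g'"
    using M(1) g' unfolding stable_system_of_monics_def by auto
  have L: "is_pullback C u g f n" by (rule FPC_pullback[OF left])
  note dL = pullbackD[OF L]
  have R: "is_pullback C g' h g \<gamma>" by (rule FPC_decompose_pullback[OF M left outer g' \<gamma>])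
  note dR = pullbackD[OF R]
  show ?thesis
    unfolding is_FPC_def
  proof (intro conjI allI impI)
    fix u' v w t assume W: "is_pullback C g' w u' v"
      and t: "t \<in> Arr C" "Dom C t = Dom C u'" "Cod C t = Dom C g" "g \<cdot> t = u'"
    note dW = pullbackD[OF W]
    have "u' \<in> Arr C" "Cod C u' = Cod C u" using dW dL g' by auto
    then obtain b a where "is_pullback C u' u b a"
      using M(2) u unfolding has_pullbacks_along_def by metis
    then have Q: "is_pullback C u u' a b" by (rule pullback_sym)
    note dQ = pullbackD[OF Q]
    have QW: "is_pullback C (g' \<cdot> u) w a (v \<cdot> b)" by (rule pullback_paste[OF Q W])
    have Q': "is_pullback C (g' \<cdot> u) (g' \<cdot> u') a b"
      using pullback_postcompose_mono[OF Q mono] g' dL by auto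
    have "u \<cdot> a = g \<cdot> (t \<cdot> b)" using dQ t dL cat_comp_assoc[of b t g] by auto
    then obtain s where s: "s \<in> Arr C" "Dom C s = Dom C a" "Cod C s = Dom C f" "f \<cdot> s = a" "n \<cdot> s = t \<cdot> b"
      using pullback_factor[OF L, of a "t \<cdot> b"] dQ t dL by auto
    have \<gamma>ts: "(\<gamma> \<cdot> t) \<cdot> b = \<alpha> \<cdot> s"
      using t s \<gamma> dQ dL cat_comp_assoc[of b t \<gamma>] cat_comp_assoc[of s n \<gamma>] by auto
    obtain y where y: "y \<in> Arr C" "Dom C y = Cod C (v \<cdot> b)" "Cod C y = Dom C h" "h \<cdot> y = w"
        "y \<cdot> (v \<cdot> b) = \<alpha> \<cdot> s"
      by (rule FPC_factor[OF outer QW s(1-4)])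
    have cod_vb: "Cod C (v \<cdot> b) = Cod C v" using dW dQ by auto
    have "y \<cdot> v = \<gamma> \<cdot> t"
    proof (rule FPC_factor_unique[OF outer Q' s(1-4)])
      show "h \<cdot> (y \<cdot> v) = g' \<cdot> u'" using y dW cod_vb dR cat_comp_assoc[of v y h] by auto
      show "(y \<cdot> v) \<cdot> b = \<alpha> \<cdot> s" using y dW dQ cod_vb cat_comp_assoc[of b v y] by auto
      show "h \<cdot> (\<gamma> \<cdot> t) = g' \<cdot> u'" using t \<gamma> dL g' dR(1,2) cat_comp_assoc[of t \<gamma> h] cat_comp_assoc[of t g g'] by auto
    qed (use t y dW dQ cod_vb \<gamma>ts \<gamma> in auto)
    then show "\<exists>!y. y \<in> Arr C \<and> Dom C y = Cod C v \<and> Cod C y = Dom C h \<and> h \<cdot> y = w \<and> y \<cdot> v = \<gamma> \<cdot> t"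
    proof (intro ex1I[of _ y])
      fix y' assume y': "y' \<in> Arr C \<and> Dom C y' = Cod C v \<and> Cod C y' = Dom C h \<and> h \<cdot> y' = w \<and> y' \<cdot> v = \<gamma> \<cdot> t"
      then have y'vb: "y' \<cdot> (v \<cdot> b) = \<alpha> \<cdot> s"
        using dW dQ \<gamma>ts cat_comp_assoc[of b v y'] by auto
      show "y' = y" by (rule FPC_factor_unique[OF outer QW s(1-4)]) (use y y' y'vb cod_vb in auto)
    qed (use y cod_vb in auto)
  qed (use R \<gamma> dL g' in auto)
qed

lemma target_is_functor: "is_functor (FPC_v C M) (restrict_cat C M) (target_obj C) target_arr"
  unfolding is_functor_def target_obj_def target_arr_def
  by (auto simp: FPC_v_arr_iff is_FPC_def is_pullback_def)

lemma op_cartesian_FPC_lift: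
  assumes M: "stable_system_of_monics C M" "has_pullbacks_along C M"
    and u: "u \<in> M" and F: "is_FPC C e u n g"
  shows "op_cartesian (FPC_v C M) (restrict_cat C M) (target_obj C) target_arr (e, g, n, u)"
  unfolding op_cartesian_def
proof (intro conjI ballI impI)
  have stable: "\<And>f m p q. m \<in> M \<Longrightarrow> is_pullback C f m p q \<Longrightarrow> p \<in> M"
    and mono: "\<And>m. m \<in> M \<Longrightarrow> is_mono C m"
    using M(1) unfolding stable_system_of_monics_def by blast+
  have L: "is_pullback C u g e n" by (rule FPC_pullback[OF F])
  note dL = pullbackD[OF L]
  have "n \<in> M" using stable[OF u pullback_sym[OF L]] .
  then show "(e, g, n, u) \<in> Arr (FPC_v C M)" using u F by (simp add: FPC_v_arr_iff)
  fix \<psi> g' assume \<psi>: "\<psi> \<in> Arr (FPC_v C M)" and g': "g' \<in> Arr (restrict_cat C M)"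
    and dom_\<psi>: "Dom (FPC_v C M) \<psi> = Dom (FPC_v C M) (e, g, n, u)"
    and dom_g': "Dom (restrict_cat C M) g' = target_obj C (Cod (FPC_v C M) (e, g, n, u))"
    and "Cod (restrict_cat C M) g' = target_obj C (Cod (FPC_v C M) \<psi>)"
    and target_\<psi>: "Comp (restrict_cat C M) g' (target_arr (e, g, n, u)) = target_arr \<psi>"
  obtain h \<alpha> where \<psi>_def: "\<psi> = (e, h, \<alpha>, g' \<cdot> u)"
    using dom_\<psi> target_\<psi> by (cases \<psi>) (simp add: target_arr_def)
  have g'M: "g' \<in> M" and dom_g': "Dom C g' = Cod C g"
    using g' dom_g' by (simp_all add: target_obj_def)
  have outer: "is_FPC C e (g' \<cdot> u) \<alpha> h" using \<psi> by (simp add: \<psi>_def FPC_v_arr_iff)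
  have S: "is_pullback C (g' \<cdot> u) (g' \<cdot> g) e n"
    using pullback_postcompose_mono[OF L mono[OF g'M]] dom_g' dL by simp
  obtain \<gamma> where
    \<gamma>: "\<gamma> \<in> Arr C" "Dom C \<gamma> = Dom C g" "Cod C \<gamma> = Dom C h" "h \<cdot> \<gamma> = g' \<cdot> g" "\<gamma> \<cdot> n = \<alpha>"
    by (rule FPC_factor_pullback[OF outer S]) (use dL in simp)
  have right: "is_FPC C g g' \<gamma> h" by (rule FPC_decompose[OF M F u outer g'M dom_g' \<gamma>])
  have "\<gamma> \<in> M" using stable[OF g'M pullback_sym[OF FPC_pullback[OF right]]] .
  show "\<exists>!\<chi>. \<chi> \<in> Arr (FPC_v C M) \<and> Dom (FPC_v C M) \<chi> = Cod (FPC_v C M) (e, g, n, u) \<and>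
      Cod (FPC_v C M) \<chi> = Cod (FPC_v C M) \<psi> \<and> Comp (FPC_v C M) \<chi> (e, g, n, u) = \<psi> \<and> target_arr \<chi> = g'"
  proof (rule ex1I[of _ "(g, h, \<gamma>, g')"])
    show "(g, h, \<gamma>, g') \<in> Arr (FPC_v C M) \<and> Dom (FPC_v C M) (g, h, \<gamma>, g') = Cod (FPC_v C M) (e, g, n, u) \<and>
      Cod (FPC_v C M) (g, h, \<gamma>, g') = Cod (FPC_v C M) \<psi> \<and>
      Comp (FPC_v C M) (g, h, \<gamma>, g') (e, g, n, u) = \<psi> \<and> target_arr (g, h, \<gamma>, g') = g'"
      using right g'M \<open>\<gamma> \<in> M\<close> \<gamma>(5) by (simp add: FPC_v_arr_iff target_arr_def \<psi>_def)
  next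
    fix \<chi> assume "\<chi> \<in> Arr (FPC_v C M) \<and> Dom (FPC_v C M) \<chi> = Cod (FPC_v C M) (e, g, n, u) \<and>
      Cod (FPC_v C M) \<chi> = Cod (FPC_v C M) \<psi> \<and> Comp (FPC_v C M) \<chi> (e, g, n, u) = \<psi> \<and> target_arr \<chi> = g'"
    then obtain \<gamma>' where \<chi>_def: "\<chi> = (g, h, \<gamma>', g')" and right': "is_FPC C g g' \<gamma>' h"
      and "\<gamma>' \<cdot> n = \<alpha>"
      by (cases \<chi>) (simp add: FPC_v_arr_iff target_arr_def \<psi>_def)
    moreover note pullbackD[OF FPC_pullback[OF right']]
    ultimately have "\<gamma>' = \<gamma>"
      using FPC_factor_pullback_unique[OF outer S, of \<gamma>' \<gamma>] \<gamma> dL by simp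
    then show "\<chi> = (g, h, \<gamma>, g')" by (simp add: \<chi>_def)
  qed
qed

end

theorem mainTheorem3:
  fixes C :: "('o, 'a) cat" and M :: "'a set"
  assumes "category C"
    and "stable_system_of_monics C M"
    and "has_pullbacks_along C M"
    and "has_FPCs_along C M"
  shows "grothendieck_opfibration (FPC_v C M) (restrict_cat C M) (target_obj C) target_arr"
  unfolding grothendieck_opfibration_def
proof (intro conjI ballI impI)
  show "is_functor (FPC_v C M) (restrict_cat C M) (target_obj C) target_arr"
    by (rule target_is_functor[OF assms(1)])
  fix e u assume "e \<in> Obj (FPC_v C M)" "u \<in> Arr (restrict_cat C M)"
    and "Dom (restrict_cat C M) u = target_obj C e"
  then have "e \<in> Arr C" "u \<in> M" "Dom C u = Cod C e" by (simp_all add: target_obj_def)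
  then obtain n g where "is_FPC C e u n g"
    using assms(4) unfolding has_FPCs_along_def by metis
  with op_cartesian_FPC_lift[OF assms(1-3) \<open>u \<in> M\<close>]
  show "\<exists>\<phi>. \<phi> \<in> Arr (FPC_v C M) \<and> Dom (FPC_v C M) \<phi> = e \<and> target_arr \<phi> = u \<and>
      op_cartesian (FPC_v C M) (restrict_cat C M) (target_obj C) target_arr \<phi>"
    by (intro exI[of _ "(e, g, n, u)"]) (auto simp: op_cartesian_def target_arr_def)
qed

end
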